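(* Let $Q=(Q_t)_{t\ge0}$ be a Feller semigroup on $C_0(G)$ such that for all $f\in D(\alpha_1,\cdots,\alpha_N)$, $x\in G$, $t\ge0$, $$Q_tf(x)=f(x)+\frac12\int_0^tQ_uf''(x)\,du.$$ Then $Q$ is the semigroup of the Walsh Brownian motion $W(\alpha_1,\cdots,\alpha_N)$.
   Context: $G$ is the union of $N$ half-lines $D_i=\{h\vec e_i:h\ge0\}$ glued at $0$ with distance $d(h\vec e_i,h'\vec e_j)=h+h'$ ($i\ne j$), $|h-h'|$ ($i=j$); $\alpha_1,\dots,\alpha_N>0$, $\sum\alpha_i=1$. $C_0(G)$: continuous functions vanishing at infinity. For $f:G\to\mathbb R$, $f_i(h)=f(h\vec e_i)$. $C^2_b(G^* )$: $f\in C(G)$ with each $f_i$ twice differentiable on $]0,\infty[$, $f_i',f_i''$ bounded continuous on $]0,\infty[$ with finite limits at $0+$. $D(\alpha_1,\cdots,\alpha_N)=\{f\in C^2_b(G^* ):\sum\alpha_if'_i(0+)=0\}$; $f''(x)=f_i''(|x|)$ for $x\in D_i\setminus\{0\}$, $f''(0)=f''_N(0+)$. Walsh Brownian motion $W(\alpha_1,\cdots,\alpha_N)$ has semigroup $P_tf(h\vec e_j)=2\sum_i\alpha_ip_tf_i(-h)+p_tf_j(h)-p_tf_j(-h)$ ($h>0$), $P_tf(0)=2\sum_i\alpha_ip_tf_i(0)$, with $f_i$ extended by $0$ on $]-\infty,0[$ and $p_t$ the one-dimensional heat semigroup. *)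

theory Defs
  imports "HOL-Probability.Probability"
begin

text \<open>A point h e_i with h > 0 is represented by the pair (i, h); the origin
  by the canonical pair (0, 0).\<close>

definition Gset :: "nat \<Rightarrow> (nat \<times> real) set" where
  "Gset N = {(i, h). 1 \<le> i \<and> i \<le> N \<and> h > 0} \<union> {(0, 0)}"

definition gpt :: "nat \<Rightarrow> real \<Rightarrow> nat \<times> real" where
  "gpt i h = (if h = 0 then (0, 0) else (i, h))"

definition gdist :: "nat \<times> real \<Rightarrow> nat \<times> real \<Rightarrow> real" where
  "gdist x y = (if fst x = fst y then \<bar>snd x - snd y\<bar> else snd x + snd y)"

definition Gm :: "nat \<Rightarrow> (nat \<times> real) measure" where
  "Gm N = restrict_space borel (Gset N)"

definition gcont :: "nat \<Rightarrow> (nat \<times> real \<Rightarrow> real) \<Rightarrow> bool" where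
  "gcont N f \<longleftrightarrow> (\<forall>x\<in>Gset N. \<forall>e>0. \<exists>d>0. \<forall>y\<in>Gset N. gdist x y < d \<longrightarrow> \<bar>f y - f x\<bar> < e)"

definition C0 :: "nat \<Rightarrow> (nat \<times> real \<Rightarrow> real) set" where
  "C0 N = {f. gcont N f \<and> (\<forall>e>0. \<exists>R. \<forall>y\<in>Gset N. snd y > R \<longrightarrow> \<bar>f y\<bar> < e)}"

definition fbr :: "(nat \<times> real \<Rightarrow> real) \<Rightarrow> nat \<Rightarrow> real \<Rightarrow> real" where
  "fbr f i = (\<lambda>h. f (gpt i h))"

definition D1 :: "(nat \<times> real \<Rightarrow> real) \<Rightarrow> nat \<Rightarrow> real \<Rightarrow> real" where
  "D1 f i = deriv (fbr f i)"

definition D2 :: "(nat \<times> real \<Rightarrow> real) \<Rightarrow> nat \<Rightarrow> real \<Rightarrow> real" where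
  "D2 f i = deriv (D1 f i)"

definition C2b :: "nat \<Rightarrow> (nat \<times> real \<Rightarrow> real) set" where
  "C2b N = {f. gcont N f \<and>
     (\<forall>i\<in>{1..N}.
        (\<forall>h>0. fbr f i differentiable (at h) \<and> D1 f i differentiable (at h)) \<and>
        bounded (D1 f i ` {0<..}) \<and> continuous_on {0<..} (D1 f i) \<and>
        bounded (D2 f i ` {0<..}) \<and> continuous_on {0<..} (D2 f i) \<and>
        (\<exists>L. (D1 f i \<longlongrightarrow> L) (at_right 0)) \<and>
        (\<exists>L. (D2 f i \<longlongrightarrow> L) (at_right 0)))}"

definition Dal :: "nat \<Rightarrow> (nat \<Rightarrow> real) \<Rightarrow> (nat \<times> real \<Rightarrow> real) set" where
  "Dal N \<alpha> = {f \<in> C2b N. (\<Sum>i=1..N. \<alpha> i * Lim (at_right 0) (D1 f i)) = 0}"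

definition fpp :: "nat \<Rightarrow> (nat \<times> real \<Rightarrow> real) \<Rightarrow> nat \<times> real \<Rightarrow> real" where
  "fpp N f x = (if snd x = 0 then Lim (at_right 0) (D2 f N) else D2 f (fst x) (snd x))"

definition gauss :: "real \<Rightarrow> real \<Rightarrow> real" where
  "gauss t y = exp (- (y\<^sup>2) / (2 * t)) / sqrt (2 * pi * t)"

definition heat :: "real \<Rightarrow> (real \<Rightarrow> real) \<Rightarrow> real \<Rightarrow> real" where
  "heat t g y = (if t = 0 then g y else (\<integral>z. g z * gauss t (y - z) \<partial>lborel))"

definition fext :: "(nat \<times> real \<Rightarrow> real) \<Rightarrow> nat \<Rightarrow> real \<Rightarrow> real" where
  "fext f i z = (if z \<ge> 0 then f (gpt i z) else 0)"

definition walshP :: "nat \<Rightarrow> (nat \<Rightarrow> real) \<Rightarrow> real \<Rightarrow> (nat \<times> real \<Rightarrow> real) \<Rightarrow> nat \<times> real \<Rightarrow> real" where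
  "walshP N \<alpha> t f x =
    (if t = 0 then f x
     else if snd x = 0 then 2 * (\<Sum>i=1..N. \<alpha> i * heat t (fext f i) 0)
     else 2 * (\<Sum>i=1..N. \<alpha> i * heat t (fext f i) (- snd x))
          + heat t (fext f (fst x)) (snd x) - heat t (fext f (fst x)) (- snd x))"

section \<open>Feller semigroups, given by their (sub-Markov) transition kernels\<close>

definition Qop :: "(real \<Rightarrow> nat \<times> real \<Rightarrow> (nat \<times> real) measure) \<Rightarrow> real \<Rightarrow> (nat \<times> real \<Rightarrow> real) \<Rightarrow> nat \<times> real \<Rightarrow> real" where
  "Qop K t f x = (\<integral>y. f y \<partial>(K t x))"

definition feller :: "nat \<Rightarrow> (real \<Rightarrow> nat \<times> real \<Rightarrow> (nat \<times> real) measure) \<Rightarrow> bool" where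
  "feller N K \<longleftrightarrow>
    (\<forall>t\<ge>0. K t \<in> measurable (Gm N) (subprob_algebra (Gm N))) \<and>
    (\<forall>t\<ge>0. \<forall>f\<in>C0 N. Qop K t f \<in> C0 N) \<and>
    (\<forall>f\<in>C0 N. \<forall>x\<in>Gset N. Qop K 0 f x = f x) \<and>
    (\<forall>s\<ge>0. \<forall>t\<ge>0. \<forall>f\<in>C0 N. \<forall>x\<in>Gset N. Qop K (s + t) f x = Qop K s (Qop K t f) x) \<and>
    (\<forall>f\<in>C0 N. \<forall>e>0. \<exists>d>0. \<forall>t. 0 < t \<and> t < d \<longrightarrow> (\<forall>x\<in>Gset N. \<bar>Qop K t f x - f x\<bar> \<le> e))"

end

theory Submission
  imports Defs
begin

text \<open>Fix t > 0 and a starting point x at distance h from the origin. The function cos(w d(0, .))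
  lies in the domain and satisfies f'' = -w^2 f, so the hypothesis becomes a linear integral
  equation for u |-> Q_u f(x), whose solution is exp(-w^2 t/2) cos(w h). The same holds for the
  functions equal to B_i sin(w d(0, .)) on branch i whenever sum alpha_i B_i = 0; the choice
  B = e_i / alpha_i - 1 isolates branch i. Thus the Fourier data of the distribution of the distance
  to the origin, and of its restrictions to the branches, coincide with those of the Walsh kernel,
  which are computed from the Fourier transform of the Gaussian. On a half-line a finite measure is
  determined by its cosine transform, and by its sine transform if it does not charge 0 (Levy's
  uniqueness theorem applied after adding reflected measures), so Q_t(x, .) is the Walsh kernel.\<close>

section \<open>Finite measures on the line determined by Fourier data\<close>

lemma
  assumes "finite_measure M" "sets M = sets borel"
  shows Re_char_eq_integral_cos: "Re (char M w) = (\<integral>x. cos (w * x) \<partial>M)"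
    and Im_char_eq_integral_sin: "Im (char M w) = (\<integral>x. sin (w * x) \<partial>M)"
proof -
  interpret finite_measure M by fact
  have "integrable M (\<lambda>x. iexp (w * x))"
    by (rule integrable_const_bound[of _ 1])
       (auto simp: measurable_cong_sets[OF assms(2) refl] simp del: of_real_mult)
  then show "Re (char M w) = (\<integral>x. cos (w * x) \<partial>M)" "Im (char M w) = (\<integral>x. sin (w * x) \<partial>M)"
    unfolding char_def
    by (simp_all add: integral_Re[symmetric] integral_Im[symmetric] Re_exp Im_exp del: integral_Re integral_Im)
qed

text \<open>Levy's uniqueness theorem, transferred from probability distributions to finite measures
  by normalising with the total mass.\<close>
lemma finite_measure_char_unique:
  fixes M1 M2 :: "real measure"
  assumes f1: "finite_measure M1" and f2: "finite_measure M2"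
    and s1: "sets M1 = sets borel" and s2: "sets M2 = sets borel"
    and ch: "char M1 = char M2"
  shows "M1 = M2"
proof -
  interpret f1: finite_measure M1 by fact
  interpret f2: finite_measure M2 by fact
  have sp1: "space M1 = UNIV" and sp2: "space M2 = UNIV"
    using sets_eq_imp_space_eq[OF s1] sets_eq_imp_space_eq[OF s2] by simp_all
  define m where "m = measure M1 UNIV"
  have "char M1 0 = m" "char M2 0 = measure M2 UNIV"
    unfolding char_def m_def using sp1 sp2 by (simp_all add: scaleR_conv_of_real)
  then have m2: "measure M2 UNIV = m" using ch by simp
  show ?thesis
  proof (cases "m = 0")
    case True
    have "emeasure M1 S \<le> emeasure M1 UNIV" "emeasure M2 S \<le> emeasure M2 UNIV" for S
      by (metis emeasure_space sp1 sp2)+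
    moreover have "emeasure M1 UNIV = 0" "emeasure M2 UNIV = 0"
      using True m2 f1.emeasure_eq_measure[of UNIV] f2.emeasure_eq_measure[of UNIV] by (simp_all add: m_def)
    ultimately have "emeasure M1 S = 0" "emeasure M2 S = 0" for S
      by (metis le_zero_eq)+
    then show ?thesis using s1 s2 by (intro measure_eqI) auto
  next
    case False
    then have mpos: "m > 0" using measure_nonneg[of M1 UNIV] unfolding m_def by linarith
    define P1 where "P1 = density M1 (\<lambda>_. ennreal (1/m))"
    define P2 where "P2 = density M2 (\<lambda>_. ennreal (1/m))"
    have "real_distribution P1"
      unfolding real_distribution_def real_distribution_axioms_def P1_def
      using mpos s1 sp1 f1.emeasure_eq_measure[of UNIV]
      by (auto intro!: prob_spaceI simp: emeasure_density_const m_def ennreal_mult''[symmetric])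
    moreover have "real_distribution P2"
      unfolding real_distribution_def real_distribution_axioms_def P2_def
      using mpos s2 sp2 f2.emeasure_eq_measure[of UNIV] m2
      by (auto intro!: prob_spaceI simp: emeasure_density_const ennreal_mult''[symmetric])
    moreover have "char P1 w = complex_of_real (1/m) * char M1 w" for w
      unfolding P1_def char_def using mpos
      by (subst integral_density) (auto simp: measurable_cong_sets[OF s1 refl] scaleR_conv_of_real)
    moreover have "char P2 w = complex_of_real (1/m) * char M2 w" for w
      unfolding P2_def char_def using mpos
      by (subst integral_density) (auto simp: measurable_cong_sets[OF s2 refl] scaleR_conv_of_real)
    ultimately have "P1 = P2" using ch by (intro Levy_uniqueness) auto
    moreover have "M1 = density P1 (\<lambda>_. ennreal m)" "M2 = density P2 (\<lambda>_. ennreal m)"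
      unfolding P1_def P2_def using mpos
      by (simp_all add: density_density_eq ennreal_mult''[symmetric] density_1)
    ultimately show ?thesis by simp
  qed
qed

lemma finite_measure_fourier_unique:
  fixes M1 M2 :: "real measure"
  assumes "finite_measure M1" "finite_measure M2" "sets M1 = sets borel" "sets M2 = sets borel"
    and "\<And>w. (\<integral>x. cos (w * x) \<partial>M1) = (\<integral>x. cos (w * x) \<partial>M2)"
    and "\<And>w. (\<integral>x. sin (w * x) \<partial>M1) = (\<integral>x. sin (w * x) \<partial>M2)"
  shows "M1 = M2"
  using assms by (intro finite_measure_char_unique ext complex_eqI)
    (simp_all add: Re_char_eq_integral_cos Im_char_eq_integral_sin)

definition add_measure :: "real measure \<Rightarrow> real measure \<Rightarrow> real measure" where
  "add_measure A B = measure_of UNIV (sets borel) (\<lambda>S. emeasure A S + emeasure B S)"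

context
  fixes A B :: "real measure"
  assumes sets_A: "sets A = sets borel" and sets_B: "sets B = sets borel"
begin

lemma sets_add_measure [simp]: "sets (add_measure A B) = sets borel"
  unfolding add_measure_def using sets.sigma_sets_eq[of borel] by simp

lemma space_add_measure [simp]: "space (add_measure A B) = UNIV"
  unfolding add_measure_def by simp

lemma emeasure_add_measure:
  assumes "S \<in> sets borel"
  shows "emeasure (add_measure A B) S = emeasure A S + emeasure B S"
  unfolding add_measure_def
proof (rule emeasure_measure_of_sigma[OF _ _ _ assms])
  show "sigma_algebra UNIV (sets borel)"
    using sets.sigma_algebra_axioms[of borel] by simp
  show "positive (sets borel) (\<lambda>S. emeasure A S + emeasure B S)"
    by (auto simp: positive_def)
  show "countably_additive (sets borel) (\<lambda>S. emeasure A S + emeasure B S)"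
    unfolding countably_additive_def
  proof (intro allI impI)
    fix F :: "nat \<Rightarrow> real set"
    assume F: "range F \<subseteq> sets borel" "disjoint_family F" "\<Union> (range F) \<in> sets borel"
    have "(\<Sum>i. emeasure A (F i)) = emeasure A (\<Union> (range F))"
      "(\<Sum>i. emeasure B (F i)) = emeasure B (\<Union> (range F))"
      using F sets_A sets_B by (auto intro!: suminf_emeasure)
    then show "(\<Sum>i. emeasure A (F i) + emeasure B (F i))
        = emeasure A (\<Union> (range F)) + emeasure B (\<Union> (range F))"
      by (metis suminf_add summableI)
  qed
qed

lemma nn_integral_add_measure:
  assumes "f \<in> borel_measurable borel"
  shows "(\<integral>\<^sup>+x. f x \<partial>add_measure A B) = (\<integral>\<^sup>+x. f x \<partial>A) + (\<integral>\<^sup>+x. f x \<partial>B)"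
  using assms
proof (induction rule: borel_measurable_induct)
  case (cong f g)
  have space: "space A = UNIV" "space B = UNIV" "space (add_measure A B) = UNIV"
    using sets_eq_imp_space_eq[OF sets_A] sets_eq_imp_space_eq[OF sets_B]
      sets_eq_imp_space_eq[OF sets_add_measure] by simp_all
  show ?case using cong by (simp add: space)
next
  case (set S)
  then show ?case using sets_A sets_B by (simp add: emeasure_add_measure)
next
  case (mult u c)
  then show ?case
    by (simp add: measurable_cong_sets[OF sets_A refl] measurable_cong_sets[OF sets_B refl]
        measurable_cong_sets[OF sets_add_measure refl]
        nn_integral_cmult distrib_left)
next
  case (add u v)
  then show ?case
    by (simp add: measurable_cong_sets[OF sets_A refl] measurable_cong_sets[OF sets_B refl]
        measurable_cong_sets[OF sets_add_measure refl]
        nn_integral_add algebra_simps)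
next
  case (seq U)
  have "(\<integral>\<^sup>+x. (SUP i. U i) x \<partial>M) = (SUP i. (\<integral>\<^sup>+x. U i x \<partial>M))"
    if "sets M = sets borel" for M :: "real measure"
    unfolding SUP_apply
    by (rule nn_integral_monotone_convergence_SUP) (use seq that in \<open>auto simp: measurable_cong_sets[OF that refl]\<close>)
  moreover have "incseq (\<lambda>i. (\<integral>\<^sup>+x. U i x \<partial>A))" "incseq (\<lambda>i. (\<integral>\<^sup>+x. U i x \<partial>B))"
    using seq by (auto simp: incseq_def le_fun_def intro!: nn_integral_mono)
  ultimately show ?case using seq sets_A sets_B by (simp add: ennreal_SUP_add)
qed

lemma finite_measure_add_measure:
  assumes "finite_measure A" "finite_measure B"
  shows "finite_measure (add_measure A B)"
  using assms emeasure_add_measure[of UNIV] sets_eq_imp_space_eq[OF sets_A] sets_eq_imp_space_eq[OF sets_B]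
  by (intro finite_measureI) (simp add: finite_measure.emeasure_finite)

lemma integral_add_measure:
  fixes g :: "real \<Rightarrow> real"
  assumes "finite_measure A" "finite_measure B"
    and g: "g \<in> borel_measurable borel" and bounded: "\<And>x. \<bar>g x\<bar> \<le> C"
  shows "(\<integral>x. g x \<partial>add_measure A B) = (\<integral>x. g x \<partial>A) + (\<integral>x. g x \<partial>B)"
proof -
  have int: "integrable M g" if "finite_measure M" "sets M = sets borel" for M
    using that g bounded
    by (intro finite_measure.integrable_const_bound[of _ _ C]) (auto simp: measurable_cong_sets[OF that(2) refl])
  have iA: "integrable A g" and iB: "integrable B g" and iAB: "integrable (add_measure A B) g"
    using assms sets_A sets_B finite_measure_add_measure by (auto intro: int)
  have "(\<integral>\<^sup>+x. ennreal (h x) \<partial>add_measure A B) = (\<integral>\<^sup>+x. ennreal (h x) \<partial>A) + (\<integral>\<^sup>+x. ennreal (h x) \<partial>B)"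
    if "h \<in> borel_measurable borel" for h :: "real \<Rightarrow> real"
    using that by (intro nn_integral_add_measure) simp
  note pos_neg = this[OF g] this[OF borel_measurable_uminus[OF g]]
  have "(\<integral>\<^sup>+x. ennreal (g x) \<partial>A) < top" "(\<integral>\<^sup>+x. ennreal (g x) \<partial>B) < top"
    "(\<integral>\<^sup>+x. ennreal (- g x) \<partial>A) < top" "(\<integral>\<^sup>+x. ennreal (- g x) \<partial>B) < top"
    using iA iB unfolding real_integrable_def by (auto simp: top.not_eq_extremum)
  then show ?thesis
    unfolding real_lebesgue_integral_def[OF iA] real_lebesgue_integral_def[OF iB]
      real_lebesgue_integral_def[OF iAB] pos_neg
    using g by (simp add: enn2real_plus)
qed

end

lemma emeasure_add_eq_if_fourier_add_eq:
  fixes A1 A2 B1 B2 :: "real measure"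
  assumes fin: "finite_measure A1" "finite_measure A2" "finite_measure B1" "finite_measure B2"
    and sets: "sets A1 = sets borel" "sets A2 = sets borel" "sets B1 = sets borel" "sets B2 = sets borel"
    and cos: "\<And>w. (\<integral>x. cos (w * x) \<partial>A1) + (\<integral>x. cos (w * x) \<partial>B1)
                  = (\<integral>x. cos (w * x) \<partial>A2) + (\<integral>x. cos (w * x) \<partial>B2)"
    and sin: "\<And>w. (\<integral>x. sin (w * x) \<partial>A1) + (\<integral>x. sin (w * x) \<partial>B1)
                  = (\<integral>x. sin (w * x) \<partial>A2) + (\<integral>x. sin (w * x) \<partial>B2)"
    and S: "S \<in> sets borel"
  shows "emeasure A1 S + emeasure B1 S = emeasure A2 S + emeasure B2 S"
proof -
  have "add_measure A1 B1 = add_measure A2 B2"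
    using fin sets cos sin
    by (intro finite_measure_fourier_unique) (simp_all add: finite_measure_add_measure integral_add_measure[where C=1])
  then show ?thesis using S sets by (metis emeasure_add_measure)
qed

lemma
  fixes P :: "real measure" and g :: "real \<Rightarrow> real"
  assumes "sets P = sets borel"
  shows integral_distr_uminus:
      "g \<in> borel_measurable borel \<Longrightarrow> (\<integral>x. g x \<partial>distr P borel uminus) = (\<integral>x. g (- x) \<partial>P)"
    and emeasure_distr_uminus:
      "S \<in> sets borel \<Longrightarrow> emeasure (distr P borel uminus) S = emeasure P (uminus -` S)"
  using assms integral_distr[of uminus P borel g] emeasure_distr[of uminus P borel S]
  by (simp_all add: measurable_cong_sets[OF assms refl] sets_eq_imp_space_eq[OF assms])

text \<open>Adding suitable reflected measures to both sides makes the full Fourier transforms agree;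
  the reflected parts live on the opposite half-line and drop out again.\<close>
lemma sine_transform_unique:
  fixes P Q :: "real measure"
  assumes fin: "finite_measure P" "finite_measure Q"
    and sets: "sets P = sets borel" "sets Q = sets borel"
    and null: "emeasure P {..0} = 0" "emeasure Q {..0} = 0"
    and sin: "\<And>w. (\<integral>x. sin (w * x) \<partial>P) = (\<integral>x. sin (w * x) \<partial>Q)"
  shows "P = Q"
proof (rule measure_eqI)
  show "sets P = sets Q" using sets by simp
  fix S assume "S \<in> sets P"
  then have S: "S \<in> sets borel" and S_pos: "S - {..0} \<in> sets borel" using sets by auto
  have null_sets: "{..0} \<in> null_sets P" "{..0} \<in> null_sets Q"
    using null sets by (auto simp: null_sets_def)
  have reflected_null: "emeasure (distr M borel uminus) (S - {..0}) = 0"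
    if "sets M = sets borel" "emeasure M {..0} = 0" for M :: "real measure"
    using that emeasure_mono[of "uminus -` (S - {..0})" "{..0}" M]
    by (simp add: emeasure_distr_uminus[OF that(1) S_pos] subset_eq)
  have "emeasure P (S - {..0}) + emeasure (distr Q borel uminus) (S - {..0})
      = emeasure Q (S - {..0}) + emeasure (distr P borel uminus) (S - {..0})"
    using fin sets S_pos sin
    by (intro emeasure_add_eq_if_fourier_add_eq)
       (simp_all add: finite_measure.finite_measure_distr integral_distr_uminus)
  then show "emeasure P S = emeasure Q S"
    using reflected_null[OF sets(1) null(1)] reflected_null[OF sets(2) null(2)]
      emeasure_Diff_null_set[OF null_sets(1), of S] emeasure_Diff_null_set[OF null_sets(2), of S]
      S sets by simp
qed

lemma cosine_transform_unique:
  fixes P Q :: "real measure"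
  assumes fin: "finite_measure P" "finite_measure Q"
    and sets: "sets P = sets borel" "sets Q = sets borel"
    and null: "emeasure P {..<0} = 0" "emeasure Q {..<0} = 0"
    and cos: "\<And>w. (\<integral>x. cos (w * x) \<partial>P) = (\<integral>x. cos (w * x) \<partial>Q)"
  shows "P = Q"
proof (rule measure_eqI)
  show "sets P = sets Q" using sets by simp
  have sum_eq: "emeasure P S + emeasure (distr P borel uminus) S = emeasure Q S + emeasure (distr Q borel uminus) S"
    if "S \<in> sets borel" for S
    using fin sets that cos
    by (intro emeasure_add_eq_if_fourier_add_eq)
       (simp_all add: finite_measure.finite_measure_distr integral_distr_uminus)
  fix S assume "S \<in> sets P"
  then have S: "S \<in> sets borel" using sets by simp
  have null_sets: "{..<0} \<in> null_sets P" "{..<0} \<in> null_sets Q"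
    using null sets by (auto simp: null_sets_def)
  have reflected_null: "emeasure (distr M borel uminus) (S \<inter> {0<..}) = 0"
    if "sets M = sets borel" "emeasure M {..<0} = 0" for M :: "real measure"
    using that S emeasure_mono[of "uminus -` (S \<inter> {0<..})" "{..<0}" M]
    by (simp add: emeasure_distr_uminus[OF that(1)] subset_eq)
  have pos: "emeasure P (S \<inter> {0<..}) = emeasure Q (S \<inter> {0<..})"
    using sum_eq[of "S \<inter> {0<..}"] S reflected_null[OF sets(1) null(1)] reflected_null[OF sets(2) null(2)]
    by simp
  have "2 * emeasure P {0} = 2 * emeasure Q {0}"
    using sum_eq[of "{0}"] emeasure_distr_uminus[OF sets(1), of "{0}"] emeasure_distr_uminus[OF sets(2), of "{0}"]
    by (simp add: mult_2 vimage_def)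
  then have zero: "emeasure P {0} = emeasure Q {0}"
    by (simp add: ennreal_mult_cancel_left)
  have split: "emeasure M S = emeasure M (S \<inter> {0<..}) + (if 0 \<in> S then emeasure M {0} else 0)"
    if M: "sets M = sets borel" "{..<0} \<in> null_sets M" for M :: "real measure"
  proof -
    have "emeasure M (S \<inter> {0<..}) + emeasure M (S \<inter> {0}) = emeasure M ((S \<inter> {0<..}) \<union> (S \<inter> {0}))"
      using S M by (intro plus_emeasure) auto
    also have "(S \<inter> {0<..}) \<union> (S \<inter> {0}) = S - {..<0}" by auto
    finally have "emeasure M (S - {..<0}) = emeasure M (S \<inter> {0<..}) + emeasure M (S \<inter> {0})" ..
    then show ?thesis using emeasure_Diff_null_set[OF M(2), of S] S M by auto
  qed
  show "emeasure P S = emeasure Q S"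
    using split[OF sets(1) null_sets(1)] split[OF sets(2) null_sets(2)] pos zero by simp
qed

lemma gauss_minus [simp]: "gauss t (- y) = gauss t y"
  by (simp add: gauss_def)

lemma gauss_minus_diff: "gauss t (- h - z) = gauss t (h + z)"
  using gauss_minus[of t "h + z"] by simp

lemma gauss_nonneg: "t \<ge> 0 \<Longrightarrow> gauss t y \<ge> 0"
  by (simp add: gauss_def)

lemma gauss_measurable [measurable]: "gauss t \<in> borel_measurable borel"
  unfolding gauss_def by measurable

lemma gauss_eq_normal_density: "t > 0 \<Longrightarrow> gauss t (y - z) = normal_density y (sqrt t) z"
  by (simp add: gauss_def normal_density_def power2_commute)

lemma gauss_sqrt_scale: "t > 0 \<Longrightarrow> gauss t (sqrt t * u) = std_normal_density u / sqrt t"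
  unfolding gauss_def std_normal_density_def
  by (simp add: power_mult_distrib real_sqrt_mult field_simps)

lemma gauss_le_gauss_diff: "t > 0 \<Longrightarrow> h \<ge> 0 \<Longrightarrow> z \<ge> 0 \<Longrightarrow> gauss t (h + z) \<le> gauss t (h - z)"
  unfolding gauss_def by (simp add: divide_right_mono power2_eq_square algebra_simps)

lemma integrable_gauss_mult_bounded:
  fixes g :: "real \<Rightarrow> real"
  assumes t: "t > 0" and g: "g \<in> borel_measurable borel" and bounded: "\<And>z. \<bar>g z\<bar> \<le> C"
  shows "integrable lborel (\<lambda>z. gauss t (y - z) * g z)"
proof (rule Bochner_Integration.integrable_bound)
  show "integrable lborel (\<lambda>z. C * gauss t (y - z))"
    using integrable_normal_density[of "sqrt t" y] t by (simp add: gauss_eq_normal_density)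
  show "AE z in lborel. norm (gauss t (y - z) * g z) \<le> norm (C * gauss t (y - z))"
    using mult_right_mono[OF order_trans[OF bounded abs_ge_self] gauss_nonneg[of t]] t
    by (intro AE_I2) (simp add: abs_mult gauss_nonneg, metis mult.commute)
qed (use g in simp)

lemma integral_gauss_iexp:
  assumes t: "t > 0"
  shows "(\<integral>z. gauss t (y - z) *\<^sub>R iexp (w * z) \<partial>lborel) = exp (- (w^2 * t) / 2) *\<^sub>R iexp (w * y)"
proof -
  let ?s = "sqrt t"
  have s: "?s > 0" using t by simp
  have "(\<integral>z. gauss t (y - z) *\<^sub>R iexp (w * z) \<partial>lborel)
      = \<bar>?s\<bar> *\<^sub>R (\<integral>u. gauss t (y - (y + ?s * u)) *\<^sub>R iexp (w * (y + ?s * u)) \<partial>lborel)"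
    using s by (intro lborel_integral_real_affine) simp
  also have "(\<lambda>u. gauss t (y - (y + ?s * u)) *\<^sub>R iexp (w * (y + ?s * u)))
      = (\<lambda>u. (iexp (w * y) / ?s) * (std_normal_density u *\<^sub>R iexp ((w * ?s) * u)))"
    using gauss_sqrt_scale[OF t] gauss_minus[of t]
    by (auto simp: fun_eq_iff distrib_left exp_add scaleR_conv_of_real algebra_simps)
  also have "(\<integral>u. (iexp (w * y) / ?s) * (std_normal_density u *\<^sub>R iexp ((w * ?s) * u)) \<partial>lborel)
      = (iexp (w * y) / ?s) * (\<integral>u. std_normal_density u *\<^sub>R iexp ((w * ?s) * u) \<partial>lborel)"
    by (rule integral_mult_right_zero)
  also have "(\<integral>u. std_normal_density u *\<^sub>R iexp ((w * ?s) * u) \<partial>lborel) = char std_normal_distribution (w * ?s)"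
    unfolding char_def by (subst integral_density) auto
  finally show ?thesis
    using s t by (simp add: char_std_normal_distribution power_mult_distrib scaleR_conv_of_real)
qed

lemma
  assumes "t > 0"
  shows integral_gauss_cos: "(\<integral>z. gauss t (y - z) * cos (w * z) \<partial>lborel) = exp (- (w^2 * t) / 2) * cos (w * y)"
    and integral_gauss_sin: "(\<integral>z. gauss t (y - z) * sin (w * z) \<partial>lborel) = exp (- (w^2 * t) / 2) * sin (w * y)"
proof -
  have int: "integrable lborel (\<lambda>z. gauss t (y - z) *\<^sub>R iexp (w * z))"
    using integrable_gauss_mult_bounded[OF assms, of "\<lambda>_. 1" 1 y]
    by (rule Bochner_Integration.integrable_bound) (auto simp: norm_mult)
  show "(\<integral>z. gauss t (y - z) * cos (w * z) \<partial>lborel) = exp (- (w^2 * t) / 2) * cos (w * y)"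
    using arg_cong[OF integral_gauss_iexp[OF assms, of y w], of Re] integral_Re[OF int]
    by (simp add: Re_exp del: integral_Re)
  show "(\<integral>z. gauss t (y - z) * sin (w * z) \<partial>lborel) = exp (- (w^2 * t) / 2) * sin (w * y)"
    using arg_cong[OF integral_gauss_iexp[OF assms, of y w], of Im] integral_Im[OF int]
    by (simp add: Im_exp del: integral_Im)
qed

section \<open>The Walsh kernel\<close>

lemma finite_measure_density_integrable:
  fixes g :: "'a \<Rightarrow> real"
  assumes "integrable M g" "\<And>z. g z \<ge> 0"
  shows "finite_measure (density M (\<lambda>z. ennreal (g z)))"
proof (rule finite_measureI)
  have "emeasure (density M (\<lambda>z. ennreal (g z))) (space M) = (\<integral>\<^sup>+z. ennreal (g z) \<partial>M)"
    using assms(1) by (subst emeasure_density) (auto intro!: nn_integral_cong split: split_indicator)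
  also have "\<dots> = ennreal (\<integral>z. g z \<partial>M)"
    using assms by (intro nn_integral_eq_integral) auto
  finally show "emeasure (density M (\<lambda>z. ennreal (g z))) (space (density M (\<lambda>z. ennreal (g z)))) \<noteq> \<infinity>"
    by simp
qed

lemma emeasure_density_nonpos_null:
  fixes g :: "real \<Rightarrow> real"
  assumes "g \<in> borel_measurable borel"
  shows "emeasure (density lborel (\<lambda>z. ennreal (indicator {0<..} z * g z))) {..0} = 0"
  using assms by (subst emeasure_density) (auto intro!: nn_integral_zero' split: split_indicator)

definition half_line_heat :: "real \<Rightarrow> real \<Rightarrow> (real \<Rightarrow> real) \<Rightarrow> real" where
  "half_line_heat t y g = (\<integral>z. indicator {0<..} z * gauss t (y - z) * g z \<partial>lborel)"

lemma integrable_half_line_heat: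
  fixes g :: "real \<Rightarrow> real"
  assumes "t > 0" "g \<in> borel_measurable borel" "\<And>z. \<bar>g z\<bar> \<le> C"
  shows "integrable lborel (\<lambda>z. indicator {0<..} z * gauss t (y - z) * g z)"
proof -
  have "\<bar>indicator {0<..} z * g z\<bar> \<le> C" for z
    using assms(3)[of z] order_trans[OF abs_ge_zero assms(3)] by (auto split: split_indicator)
  then show ?thesis
    using integrable_gauss_mult_bounded[OF assms(1), of "\<lambda>z. indicator {0<..} z * g z" C y] assms(2)
    by (simp add: ac_simps)
qed

text \<open>The extension fext f i differs from the branch function only at 0, a Lebesgue null set.\<close>
lemma heat_fext_eq_half_line_heat:
  assumes "t > 0" and [measurable]: "(\<lambda>z. indicator {0<..} z * f (i, z)) \<in> borel_measurable borel"
  shows "heat t (fext f i) y = half_line_heat t y (\<lambda>z. indicator {0<..} z * f (i, z))"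
  unfolding heat_def half_line_heat_def using assms(1)
proof (simp, intro integral_cong_AE)
  have "(\<lambda>z. fext f i z * gauss t (y - z))
      = (\<lambda>z. (indicator {0<..} z * f (i, z) + indicator {0} z * f (0, 0)) * gauss t (y - z))"
    by (auto simp: fext_def fun_eq_iff gpt_def split: split_indicator)
  then show "(\<lambda>z. fext f i z * gauss t (y - z)) \<in> borel_measurable lborel"
    by simp
  show "AE z in lborel. fext f i z * gauss t (y - z)
      = indicator {0<..} z * gauss t (y - z) * (indicator {0<..} z * f (i, z))"
    using AE_lborel_singleton[of 0]
    by eventually_elim (auto simp: fext_def gpt_def split: split_indicator)
qed simp

lemma integral_eq_half_line_integral:
  fixes F :: "real \<Rightarrow> real"
  assumes F: "integrable lborel F"
  shows "(\<integral>z. F z \<partial>lborel) = (\<integral>z. indicator {0<..} z * F z \<partial>lborel) + (\<integral>z. indicator {0<..} z * F (- z) \<partial>lborel)"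
proof -
  have "(\<integral>z. F z \<partial>lborel) = (\<integral>z. indicator {0<..} z * F z + indicator {..0} z * F z \<partial>lborel)"
    by (intro Bochner_Integration.integral_cong) (auto split: split_indicator)
  also have "\<dots> = (\<integral>z. indicator {0<..} z * F z \<partial>lborel) + (\<integral>z. indicator {..0} z * F z \<partial>lborel)"
    using F integrable_mult_indicator[of "{0<..}" lborel F] integrable_mult_indicator[of "{..0}" lborel F]
    by (intro Bochner_Integration.integral_add) auto
  also have "(\<integral>z. indicator {..0} z * F z \<partial>lborel) = (\<integral>u. indicator {..0} (- u) * F (- u) \<partial>lborel)"
    using lborel_integral_real_affine[of "-1" "\<lambda>z. indicator {..0} z * F z" 0] by simp
  also have "\<dots> = (\<integral>u. indicator {0<..} u * F (- u) \<partial>lborel)"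
    using F AE_lborel_singleton[of 0]
    by (intro integral_cong_AE) (auto elim!: eventually_mono split: split_indicator)
  finally show ?thesis .
qed

lemma
  assumes t: "t > 0"
  shows half_line_heat_sin: "half_line_heat t h (\<lambda>z. sin (w * z)) - half_line_heat t (- h) (\<lambda>z. sin (w * z))
      = exp (- (w^2 * t) / 2) * sin (w * h)"
    and half_line_heat_cos: "half_line_heat t h (\<lambda>z. cos (w * z)) + half_line_heat t (- h) (\<lambda>z. cos (w * z))
      = exp (- (w^2 * t) / 2) * cos (w * h)"
proof -
  have int: "integrable lborel (\<lambda>z. gauss t (h - z) * sin (w * z))"
    "integrable lborel (\<lambda>z. gauss t (h - z) * cos (w * z))"
    using t by (auto intro!: integrable_gauss_mult_bounded[where C=1])
  show "half_line_heat t h (\<lambda>z. sin (w * z)) - half_line_heat t (- h) (\<lambda>z. sin (w * z))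
      = exp (- (w^2 * t) / 2) * sin (w * h)"
    using integral_eq_half_line_integral[OF int(1)] integral_gauss_sin[OF t, of h w]
    by (simp add: half_line_heat_def gauss_minus_diff ac_simps)
  show "half_line_heat t h (\<lambda>z. cos (w * z)) + half_line_heat t (- h) (\<lambda>z. cos (w * z))
      = exp (- (w^2 * t) / 2) * cos (w * h)"
    using integral_eq_half_line_integral[OF int(2)] integral_gauss_cos[OF t, of h w]
    by (simp add: half_line_heat_def gauss_minus_diff ac_simps)
qed

text \<open>The density of the Walsh transition kernel on branch i, read off from the semigroup formula
  walshP: the heat kernel killed at 0 on the branch of x, plus the mass that has passed through
  the origin, of which branch i receives the share 2 alpha_i.\<close>
definition walsh_branch_density :: "(nat \<Rightarrow> real) \<Rightarrow> real \<Rightarrow> nat \<times> real \<Rightarrow> nat \<Rightarrow> real \<Rightarrow> real" where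
  "walsh_branch_density \<alpha> t x i z = indicator {0<..} z *
     (2 * \<alpha> i * gauss t (snd x + z) + (if i = fst x then gauss t (snd x - z) - gauss t (snd x + z) else 0))"

definition walsh_branch_measure :: "(nat \<Rightarrow> real) \<Rightarrow> real \<Rightarrow> nat \<times> real \<Rightarrow> nat \<Rightarrow> real measure" where
  "walsh_branch_measure \<alpha> t x i = density lborel (\<lambda>z. ennreal (walsh_branch_density \<alpha> t x i z))"

text \<open>The law of the distance to the origin |h + W_t| of a Brownian motion started at h; it is also
  the law of the distance to the origin under the Walsh kernel.\<close>
definition reflected_heat_measure :: "real \<Rightarrow> real \<Rightarrow> real measure" where
  "reflected_heat_measure t h = density lborel (\<lambda>z. ennreal (indicator {0<..} z * (gauss t (h - z) + gauss t (h + z))))"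

lemma sets_walsh_branch_measure [simp]: "sets (walsh_branch_measure \<alpha> t x i) = sets borel"
  by (simp add: walsh_branch_measure_def)

lemma sets_reflected_heat_measure [simp]: "sets (reflected_heat_measure t h) = sets borel"
  by (simp add: reflected_heat_measure_def)

lemma walsh_branch_density_measurable [measurable]: "walsh_branch_density \<alpha> t x i \<in> borel_measurable borel"
  unfolding walsh_branch_density_def by measurable

lemma walsh_branch_density_nonneg:
  assumes "t > 0" "\<alpha> i \<ge> 0" "snd x \<ge> 0"
  shows "walsh_branch_density \<alpha> t x i z \<ge> 0"
  using assms gauss_le_gauss_diff[of t "snd x" z] gauss_nonneg[of t]
  unfolding walsh_branch_density_def by (auto split: split_indicator)

lemma integral_walsh_branch_density:
  fixes g :: "real \<Rightarrow> real"
  assumes t: "t > 0" and g: "g \<in> borel_measurable borel" "\<And>z. \<bar>g z\<bar> \<le> C"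
  shows "integrable lborel (\<lambda>z. walsh_branch_density \<alpha> t x i z * g z)"
    and "(\<integral>z. walsh_branch_density \<alpha> t x i z * g z \<partial>lborel)
      = 2 * \<alpha> i * half_line_heat t (- snd x) g
        + (if i = fst x then half_line_heat t (snd x) g - half_line_heat t (- snd x) g else 0)"
proof -
  let ?K = "\<lambda>y z. indicator {0<..} z * gauss t (y - z) * g z"
  have eq: "walsh_branch_density \<alpha> t x i z * g z
      = 2 * \<alpha> i * ?K (- snd x) z + (if i = fst x then ?K (snd x) z - ?K (- snd x) z else 0)" for z
    by (simp add: walsh_branch_density_def gauss_minus_diff algebra_simps)
  note int = integrable_half_line_heat[OF t g]
  show "integrable lborel (\<lambda>z. walsh_branch_density \<alpha> t x i z * g z)"
    unfolding eq using int by (cases "i = fst x") simp_all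
  show "(\<integral>z. walsh_branch_density \<alpha> t x i z * g z \<partial>lborel)
      = 2 * \<alpha> i * half_line_heat t (- snd x) g
        + (if i = fst x then half_line_heat t (snd x) g - half_line_heat t (- snd x) g else 0)"
    unfolding eq half_line_heat_def using int by (cases "i = fst x") simp_all
qed

lemma reflected_heat_density_nonneg:
  "t > 0 \<Longrightarrow> indicator {0<..} z * (gauss t (h - z) + gauss t (h + z)) \<ge> 0"
  by (simp add: gauss_nonneg)

lemma integral_reflected_heat_density:
  fixes g :: "real \<Rightarrow> real"
  assumes t: "t > 0" and g: "g \<in> borel_measurable borel" "\<And>z. \<bar>g z\<bar> \<le> C"
  shows "integrable lborel (\<lambda>z. indicator {0<..} z * (gauss t (h - z) + gauss t (h + z)) * g z)"
    and "(\<integral>z. indicator {0<..} z * (gauss t (h - z) + gauss t (h + z)) * g z \<partial>lborel)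
      = half_line_heat t h g + half_line_heat t (- h) g"
proof -
  let ?K = "\<lambda>y z. indicator {0<..} z * gauss t (y - z) * g z"
  have eq: "indicator {0<..} z * (gauss t (h - z) + gauss t (h + z)) * g z = ?K h z + ?K (- h) z" for z
    by (simp add: gauss_minus_diff algebra_simps)
  note int = integrable_half_line_heat[OF t g]
  show "integrable lborel (\<lambda>z. indicator {0<..} z * (gauss t (h - z) + gauss t (h + z)) * g z)"
    unfolding eq using int by simp
  show "(\<integral>z. indicator {0<..} z * (gauss t (h - z) + gauss t (h + z)) * g z \<partial>lborel)
      = half_line_heat t h g + half_line_heat t (- h) g"
    unfolding eq half_line_heat_def using int by simp
qed

context
  fixes \<alpha> :: "nat \<Rightarrow> real" and t :: real and x :: "nat \<times> real" and i :: nat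
  assumes t: "t > 0" and \<alpha>: "\<alpha> i \<ge> 0" and x: "snd x \<ge> 0"
begin

lemma finite_measure_walsh_branch_measure: "finite_measure (walsh_branch_measure \<alpha> t x i)"
  unfolding walsh_branch_measure_def
  using integral_walsh_branch_density(1)[OF t, of "\<lambda>_. 1" 1] walsh_branch_density_nonneg[where \<alpha>=\<alpha> and i=i and x=x, OF t \<alpha> x]
  by (intro finite_measure_density_integrable) auto

lemma integral_walsh_branch_measure:
  fixes g :: "real \<Rightarrow> real"
  assumes "g \<in> borel_measurable borel" "\<And>z. \<bar>g z\<bar> \<le> C"
  shows "(\<integral>z. g z \<partial>walsh_branch_measure \<alpha> t x i)
      = 2 * \<alpha> i * half_line_heat t (- snd x) g
        + (if i = fst x then half_line_heat t (snd x) g - half_line_heat t (- snd x) g else 0)"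
  unfolding walsh_branch_measure_def integral_walsh_branch_density(2)[OF t assms, symmetric]
  using assms walsh_branch_density_nonneg[where \<alpha>=\<alpha> and i=i and x=x, OF t \<alpha> x] by (subst integral_density) auto

lemma walsh_branch_measure_nonpos_null: "emeasure (walsh_branch_measure \<alpha> t x i) {..0} = 0"
  unfolding walsh_branch_measure_def walsh_branch_density_def
  by (rule emeasure_density_nonpos_null) simp

end

context
  fixes t h :: real
  assumes t: "t > 0"
begin

lemma finite_measure_reflected_heat_measure: "finite_measure (reflected_heat_measure t h)"
  unfolding reflected_heat_measure_def
  using integral_reflected_heat_density(1)[OF t, of "\<lambda>_. 1" 1 h] reflected_heat_density_nonneg[OF t]
  by (intro finite_measure_density_integrable) auto

lemma integral_reflected_heat_measure:
  fixes g :: "real \<Rightarrow> real"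
  assumes "g \<in> borel_measurable borel" "\<And>z. \<bar>g z\<bar> \<le> C"
  shows "(\<integral>z. g z \<partial>reflected_heat_measure t h) = half_line_heat t h g + half_line_heat t (- h) g"
  unfolding reflected_heat_measure_def integral_reflected_heat_density(2)[OF t assms, symmetric]
  using assms reflected_heat_density_nonneg[OF t] by (subst integral_density) auto

lemma reflected_heat_measure_nonpos_null: "emeasure (reflected_heat_measure t h) {..0} = 0"
  unfolding reflected_heat_measure_def by (rule emeasure_density_nonpos_null) simp

end

lemma walshP_eq_sum_half_line_heat:
  assumes t: "t > 0" and x: "x \<in> Gset N"
    and f: "\<And>i. i \<in> {1..N} \<Longrightarrow> (\<lambda>z. indicator {0<..} z * f (i, z)) \<in> borel_measurable borel"
  shows "walshP N \<alpha> t f x = (\<Sum>i=1..N.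
      2 * \<alpha> i * half_line_heat t (- snd x) (\<lambda>z. indicator {0<..} z * f (i, z))
      + (if i = fst x then half_line_heat t (snd x) (\<lambda>z. indicator {0<..} z * f (i, z))
           - half_line_heat t (- snd x) (\<lambda>z. indicator {0<..} z * f (i, z)) else 0))"
proof -
  have heat: "heat t (fext f i) y = half_line_heat t y (\<lambda>z. indicator {0<..} z * f (i, z))"
    if "i \<in> {1..N}" for i y
    using heat_fext_eq_half_line_heat[OF t f[OF that]] .
  show ?thesis
  proof (cases "snd x = 0")
    case True
    then have "fst x \<notin> {1..N}" using x by (auto simp: Gset_def)
    then show ?thesis
      using t True by (auto simp: walshP_def heat sum_distrib_left mult.assoc intro!: sum.cong)
  next
    case False
    then have "fst x \<in> {1..N}" using x by (auto simp: Gset_def)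
    then show ?thesis
      using t False
      by (simp add: walshP_def heat sum.distrib sum_distrib_left mult.assoc sum.delta')
  qed
qed

lemma abs_sin_diff_le: "\<bar>sin (a::real) - sin b\<bar> \<le> \<bar>a - b\<bar>"
proof -
  have "\<bar>sin a - sin b\<bar> = 2 * \<bar>sin ((a - b) / 2)\<bar> * \<bar>cos ((a + b) / 2)\<bar>"
    by (simp add: sin_diff_sin abs_mult)
  also have "\<dots> \<le> 2 * \<bar>sin ((a - b) / 2)\<bar>"
    by (simp add: mult_left_le)
  finally show ?thesis using abs_sin_x_le_abs_x[of "(a - b) / 2"] by simp
qed

lemma abs_cos_diff_le: "\<bar>cos (a::real) - cos b\<bar> \<le> \<bar>a - b\<bar>"
proof -
  have "\<bar>cos a - cos b\<bar> = 2 * \<bar>sin ((a + b) / 2)\<bar> * \<bar>sin ((b - a) / 2)\<bar>"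
    by (simp add: cos_diff_cos abs_mult)
  also have "\<dots> \<le> 2 * \<bar>sin ((b - a) / 2)\<bar>"
    by (simp add: mult_left_le_one_le)
  finally show ?thesis using abs_sin_x_le_abs_x[of "(b - a) / 2"] by simp
qed

lemma gdist_ge_abs_diff: "x \<in> Gset N \<Longrightarrow> y \<in> Gset N \<Longrightarrow> \<bar>snd y - snd x\<bar> \<le> gdist x y"
  by (auto simp: gdist_def Gset_def)

lemma gcontI_lipschitz:
  assumes "\<And>x y. x \<in> Gset N \<Longrightarrow> y \<in> Gset N \<Longrightarrow> \<bar>f y - f x\<bar> \<le> L * gdist x y"
  shows "gcont N f"
  unfolding gcont_def
proof (intro ballI allI impI)
  fix x e assume x: "x \<in> Gset N" and e: "(e::real) > 0"
  show "\<exists>d>0. \<forall>y\<in>Gset N. gdist x y < d \<longrightarrow> \<bar>f y - f x\<bar> < e"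
  proof (intro exI conjI ballI impI)
    show "e / (\<bar>L\<bar> + 1) > 0" using e by simp
    fix y assume y: "y \<in> Gset N" and d: "gdist x y < e / (\<bar>L\<bar> + 1)"
    have "gdist x y \<ge> 0" using gdist_ge_abs_diff[OF x y] by linarith
    then have "\<bar>f y - f x\<bar> \<le> (\<bar>L\<bar> + 1) * gdist x y"
      using assms[OF x y] by (smt (verit) mult_right_mono abs_ge_self)
    also have "\<dots> < e" using d by (simp add: field_simps)
    finally show "\<bar>f y - f x\<bar> < e" .
  qed
qed

lemma gcont_radial:
  assumes "\<And>a b. \<bar>\<phi> a - \<phi> b\<bar> \<le> L * \<bar>a - b\<bar>" "L \<ge> 0"
  shows "gcont N (\<lambda>p. \<phi> (snd p))"
  using assms gdist_ge_abs_diff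
  by (intro gcontI_lipschitz[where L=L]) (metis abs_minus_commute mult_left_mono order_trans)

lemma gcont_branchwise:
  assumes lip: "\<And>a b. \<bar>\<phi> a - \<phi> b\<bar> \<le> L * \<bar>a - b\<bar>" and L: "L \<ge> 0" and zero: "\<phi> 0 = 0"
  shows "gcont N (\<lambda>p. B (fst p) * \<phi> (snd p))"
proof (rule gcontI_lipschitz)
  let ?M = "\<Sum>k\<le>N. \<bar>B k\<bar>"
  fix x y assume x: "x \<in> Gset N" and y: "y \<in> Gset N"
  have B: "\<bar>B (fst p)\<bar> \<le> ?M" if "p \<in> Gset N" for p
    using that by (intro member_le_sum[where f="\<lambda>k. \<bar>B k\<bar>"]) (auto simp: Gset_def)
  have \<phi>: "\<bar>B (fst p)\<bar> * \<bar>\<phi> (snd p)\<bar> \<le> ?M * (L * snd p)" if p: "p \<in> Gset N" for p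
  proof (rule mult_mono[OF B[OF p]])
    show "\<bar>\<phi> (snd p)\<bar> \<le> L * snd p"
      using lip[of "snd p" 0] p zero by (auto simp: Gset_def)
  qed (simp_all add: sum_nonneg)
  show "\<bar>B (fst y) * \<phi> (snd y) - B (fst x) * \<phi> (snd x)\<bar> \<le> ?M * L * gdist x y"
  proof (cases "fst x = fst y")
    case True
    have "\<bar>B (fst y) * \<phi> (snd y) - B (fst x) * \<phi> (snd x)\<bar> = \<bar>B (fst y)\<bar> * \<bar>\<phi> (snd y) - \<phi> (snd x)\<bar>"
      using True by (simp add: abs_mult right_diff_distrib[symmetric])
    also have "\<dots> \<le> ?M * (L * \<bar>snd y - snd x\<bar>)"
      using B[OF y] lip[of "snd y" "snd x"] by (intro mult_mono) (simp_all add: sum_nonneg)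
    also have "\<bar>snd y - snd x\<bar> = gdist x y"
      using True by (simp add: gdist_def abs_minus_commute[of "snd y"])
    finally show ?thesis by (simp add: mult.assoc)
  next
    case False
    have "\<bar>B (fst y) * \<phi> (snd y) - B (fst x) * \<phi> (snd x)\<bar>
        \<le> \<bar>B (fst y)\<bar> * \<bar>\<phi> (snd y)\<bar> + \<bar>B (fst x)\<bar> * \<bar>\<phi> (snd x)\<bar>"
      by (simp add: abs_mult[symmetric] abs_triangle_ineq4)
    also have "\<dots> \<le> ?M * (L * snd y) + ?M * (L * snd x)"
      using \<phi>[OF x] \<phi>[OF y] by linarith
    also have "\<dots> = ?M * L * gdist x y"
      using False by (simp add: gdist_def distrib_left mult.assoc)
    finally show ?thesis .
  qed
qed

lemma Dal_memberI:
  assumes gcont: "gcont N f"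
    and d1: "\<And>i h. (fbr f i has_real_derivative f' i h) (at h)"
    and d2: "\<And>i h. (f' i has_real_derivative f'' i h) (at h)"
    and cont: "\<And>i. continuous_on UNIV (f' i)" "\<And>i. continuous_on UNIV (f'' i)"
    and bounded: "\<And>i. bounded (range (f' i))" "\<And>i. bounded (range (f'' i))"
  shows "(\<Sum>i=1..N. \<alpha> i * f' i 0) = 0 \<Longrightarrow> f \<in> Dal N \<alpha>" and "fpp N f p = (if snd p = 0 then f'' N 0 else f'' (fst p) (snd p))"
proof -
  have D1: "D1 f i = f' i" for i
    unfolding D1_def using d1 by (intro ext DERIV_imp_deriv)
  have D2: "D2 f i = f'' i" for i
    unfolding D2_def D1 using d2 by (intro ext DERIV_imp_deriv)
  have lim: "(g \<longlongrightarrow> g 0) (at_right 0)" if "continuous_on UNIV g" for g :: "real \<Rightarrow> real"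
  proof -
    have "isCont g 0" using that by (simp add: continuous_on_eq_continuous_at)
    then show ?thesis unfolding isCont_def by (rule tendsto_mono[OF at_le, rotated]) simp
  qed
  have Lim: "Lim (at_right 0) g = g 0" if "continuous_on UNIV g" for g :: "real \<Rightarrow> real"
    using lim[OF that] by (intro tendsto_Lim) (auto simp: trivial_limit_at_right_real)
  have "fbr f i differentiable at h" "f' i differentiable at h" for i h
    using d1 d2 unfolding real_differentiable_def by blast+
  moreover have "bounded (f' i ` S)" "bounded (f'' i ` S)" for i S
    by (rule bounded_subset[OF bounded(1)] bounded_subset[OF bounded(2)], blast)+
  moreover have "continuous_on S (f' i)" "continuous_on S (f'' i)" for i S
    by (rule continuous_on_subset[OF cont(1)] continuous_on_subset[OF cont(2)], blast)+
  moreover have "\<exists>L. (f' i \<longlongrightarrow> L) (at_right 0)" "\<exists>L. (f'' i \<longlongrightarrow> L) (at_right 0)" for i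
    using lim cont by blast+
  ultimately have "f \<in> C2b N"
    unfolding C2b_def mem_Collect_eq D1 D2 using gcont by blast
  then show "f \<in> Dal N \<alpha>" if "(\<Sum>i=1..N. \<alpha> i * f' i 0) = 0"
    unfolding Dal_def mem_Collect_eq D1 Lim[OF cont(1)] using that by blast
  show "fpp N f p = (if snd p = 0 then f'' N 0 else f'' (fst p) (snd p))"
    by (simp add: fpp_def D2 Lim cont)
qed

definition cos_test :: "real \<Rightarrow> nat \<times> real \<Rightarrow> real" where
  "cos_test w p = cos (w * snd p)"

definition sin_test :: "(nat \<Rightarrow> real) \<Rightarrow> real \<Rightarrow> nat \<times> real \<Rightarrow> real" where
  "sin_test B w p = B (fst p) * sin (w * snd p)"

lemma bounded_range_scaled_sin_cos:
  "bounded (range (\<lambda>h. c * sin (w * h :: real)))" "bounded (range (\<lambda>h. c * cos (w * h :: real)))"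
  by (auto simp: bounded_iff abs_mult intro!: exI[of _ "\<bar>c\<bar>"] mult_left_le)

lemma cos_test_in_Dal: "cos_test w \<in> Dal N \<alpha>"
  and fpp_cos_test: "fpp N (cos_test w) = (\<lambda>p. - (w^2) * cos_test w p)"
proof -
  have gcont: "gcont N (cos_test w)"
    unfolding cos_test_def
  proof (rule gcont_radial[where L="\<bar>w\<bar>"])
    show "\<bar>cos (w * a) - cos (w * b)\<bar> \<le> \<bar>w\<bar> * \<bar>a - b\<bar>" for a b
      using abs_cos_diff_le[of "w * a" "w * b"] by (simp add: abs_mult right_diff_distrib[symmetric])
  qed simp
  note memberI = Dal_memberI[OF gcont, where f'="\<lambda>i h. - w * sin (w * h)" and f''="\<lambda>i h. - (w^2) * cos (w * h)"]
  have fbr: "fbr (cos_test w) i = (\<lambda>h. cos (w * h))" for i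
    by (auto simp: fbr_def cos_test_def gpt_def)
  show "cos_test w \<in> Dal N \<alpha>"
    by (rule memberI(1)) (auto simp: fbr power2_eq_square bounded_range_scaled_sin_cos
        intro!: derivative_eq_intros continuous_intros)
  show "fpp N (cos_test w) = (\<lambda>p. - (w^2) * cos_test w p)"
    by (rule ext, subst memberI(2)) (auto simp: fbr cos_test_def power2_eq_square bounded_range_scaled_sin_cos
        intro!: derivative_eq_intros continuous_intros)
qed

lemma sin_test_in_Dal: "(\<Sum>i=1..N. \<alpha> i * B i) = 0 \<Longrightarrow> sin_test B w \<in> Dal N \<alpha>"
  and fpp_sin_test: "fpp N (sin_test B w) = (\<lambda>p. - (w^2) * sin_test B w p)"
proof -
  have gcont: "gcont N (sin_test B w)"
    unfolding sin_test_def
  proof (rule gcont_branchwise[where L="\<bar>w\<bar>"])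
    show "\<bar>sin (w * a) - sin (w * b)\<bar> \<le> \<bar>w\<bar> * \<bar>a - b\<bar>" for a b
      using abs_sin_diff_le[of "w * a" "w * b"] by (simp add: abs_mult right_diff_distrib[symmetric])
  qed simp_all
  note memberI = Dal_memberI[OF gcont, where f'="\<lambda>i h. B i * w * cos (w * h)" and f''="\<lambda>i h. - (B i * w^2) * sin (w * h)"]
  have fbr: "fbr (sin_test B w) i = (\<lambda>h. B i * sin (w * h))" for i
    by (auto simp: fbr_def sin_test_def gpt_def)
  show "(\<Sum>i=1..N. \<alpha> i * B i) = 0 \<Longrightarrow> sin_test B w \<in> Dal N \<alpha>"
    by (rule memberI(1)) (auto simp: fbr power2_eq_square bounded_range_scaled_sin_cos
        sum_distrib_right[symmetric] mult.assoc[symmetric] intro!: derivative_eq_intros continuous_intros)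
  show "fpp N (sin_test B w) = (\<lambda>p. - (w^2) * sin_test B w p)"
    by (rule ext, subst memberI(2)) (auto simp: fbr sin_test_def power2_eq_square bounded_range_scaled_sin_cos
        intro!: derivative_eq_intros continuous_intros)
qed

section \<open>Eigenfunctions of the semigroup\<close>

lemma linear_integral_equation_exp:
  fixes g :: "real \<Rightarrow> real"
  assumes T: "T \<ge> 0" and int: "g integrable_on {0..T}"
    and eq: "\<And>t. 0 \<le> t \<Longrightarrow> t \<le> T \<Longrightarrow> g t = g0 + k * integral {0..t} g"
  shows "g T = g0 * exp (k * T)"
proof -
  let ?G = "\<lambda>t. integral {0..t} g"
  have "continuous_on {0..T} (\<lambda>t. g0 + k * ?G t)"
    by (intro continuous_intros indefinite_integral_continuous_1[OF int])
  then have cont: "continuous_on {0..T} g"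
    by (rule continuous_on_eq) (use eq in auto)
  let ?H = "\<lambda>t. (g0 + k * ?G t) * exp (- k * t)"
  have "(?H has_field_derivative 0) (at t within {0..T})" if t: "t \<in> {0..T}" for t
  proof -
    have "(?H has_field_derivative (k * g t) * exp (- k * t) + (g0 + k * ?G t) * (exp (- k * t) * (- k)))
        (at t within {0..T})"
      using integral_has_real_derivative[OF cont t] by (auto intro!: derivative_eq_intros)
    moreover have "(k * g t) * exp (- k * t) + (g0 + k * ?G t) * (exp (- k * t) * (- k)) = 0"
      using eq[of t] t by (simp add: algebra_simps)
    ultimately show ?thesis by (metis (no_types, lifting))
  qed
  then obtain c where "\<forall>t\<in>{0..T}. ?H t = c"
    using has_field_derivative_zero_constant[of "{0..T}" ?H] by auto
  then have "?H T = ?H 0" using T by force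
  then have "g T * exp (- k * T) = g0" using eq[of T] T by simp
  then show ?thesis by (simp add: exp_minus field_simps)
qed

definition dynkin_formula :: "nat \<Rightarrow> (nat \<Rightarrow> real) \<Rightarrow> (real \<Rightarrow> nat \<times> real \<Rightarrow> (nat \<times> real) measure) \<Rightarrow> bool" where
  "dynkin_formula N \<alpha> K \<longleftrightarrow> (\<forall>f\<in>Dal N \<alpha>. \<forall>x\<in>Gset N. \<forall>t\<ge>0.
     integrable (K t x) f \<and>
     (\<lambda>u. Qop K u (fpp N f) x) integrable_on {0..t} \<and>
     Qop K t f x = f x + (1/2) * integral {0..t} (\<lambda>u. Qop K u (fpp N f) x))"

lemma Qop_eigenfunction:
  assumes dynkin: "dynkin_formula N \<alpha> K" and g: "g \<in> Dal N \<alpha>" and eigen: "fpp N g = (\<lambda>p. c * g p)"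
    and x: "x \<in> Gset N" and t: "t \<ge> 0"
  shows "Qop K t g x = exp (c * t / 2) * g x"
proof -
  let ?G = "\<lambda>u. Qop K u g x"
  have Q: "(\<lambda>u. Qop K u (fpp N g) x) = (\<lambda>u. c * ?G u)"
    unfolding eigen Qop_def by simp
  have integral_cmul_real: "integral {0..u} (\<lambda>s. c * ?G s) = c * integral {0..u} ?G" for u
    using integral_cmul[of "{0..u}" c ?G] by simp
  have "?G u = g x + 1/2 * integral {0..u} (\<lambda>s. Qop K s (fpp N g) x)"
    and "(\<lambda>s. Qop K s (fpp N g) x) integrable_on {0..u}" if "u \<ge> 0" for u
    using dynkin g x that unfolding dynkin_formula_def by blast+
  then have eq: "?G u = g x + c / 2 * integral {0..u} ?G" and int: "(\<lambda>u. c * ?G u) integrable_on {0..u}"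
    if "u \<ge> 0" for u
    using that unfolding Q integral_cmul_real by auto
  show ?thesis
  proof (cases "c = 0")
    case True
    then show ?thesis using eq[OF t] by simp
  next
    case False
    then have "?G integrable_on {0..t}"
      using int[OF t] integrable_on_cmult_iff[of c ?G] by simp
    then have "?G t = g x * exp (c / 2 * t)"
      by (rule linear_integral_equation_exp[OF t]) (use eq in auto)
    then show ?thesis by (simp add: mult.commute)
  qed
qed

lemma gpt_in_Gset: "i \<in> {1..N} \<Longrightarrow> z \<ge> 0 \<Longrightarrow> gpt i z \<in> Gset N"
  by (auto simp: gpt_def Gset_def)

lemma C0_branch_continuous:
  assumes f: "f \<in> C0 N" and i: "i \<in> {1..N}"
  shows "continuous_on {0..} (\<lambda>z. f (gpt i z))"
  unfolding continuous_on_iff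
proof (intro ballI allI impI)
  fix z e assume z: "z \<in> {0::real..}" and e: "(e::real) > 0"
  obtain d where d: "d > 0" "\<forall>y\<in>Gset N. gdist (gpt i z) y < d \<longrightarrow> \<bar>f y - f (gpt i z)\<bar> < e"
    using f gpt_in_Gset[OF i, of z] z e unfolding C0_def gcont_def by force
  have "gdist (gpt i z) (gpt i z') = dist z' z" if "z' \<ge> 0" for z'
    using z that i by (auto simp: gdist_def gpt_def dist_real_def)
  then show "\<exists>d>0. \<forall>z'\<in>{0..}. dist z' z < d \<longrightarrow> dist (f (gpt i z')) (f (gpt i z)) < e"
    using d gpt_in_Gset[OF i] by (auto simp: dist_real_def)
qed

lemma C0_branch_measurable:
  assumes f: "f \<in> C0 N" and i: "i \<in> {1..N}"
  shows "(\<lambda>z. indicator {0<..} z * f (i, z)) \<in> borel_measurable borel"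
proof -
  have "continuous_on {0<..} (\<lambda>z. f (gpt i z))"
    by (rule continuous_on_subset[OF C0_branch_continuous[OF f i]]) auto
  then have "continuous_on {0<..} (\<lambda>z. f (i, z))"
    by (rule continuous_on_eq) (auto simp: gpt_def)
  then have "(\<lambda>z. indicator {0<..} z *\<^sub>R f (i, z)) \<in> borel_measurable borel"
    by (intro borel_measurable_continuous_on_indicator) auto
  then show ?thesis by simp
qed

lemma C0_bounded:
  assumes f: "f \<in> C0 N"
  obtains C where "\<And>p. p \<in> Gset N \<Longrightarrow> \<bar>f p\<bar> \<le> C"
proof -
  have "\<forall>e>0. \<exists>R. \<forall>y\<in>Gset N. R < snd y \<longrightarrow> \<bar>f y\<bar> < e"
    using f by (simp add: C0_def)
  then obtain R where R: "\<forall>y\<in>Gset N. R < snd y \<longrightarrow> \<bar>f y\<bar> < 1"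
    by (auto dest: spec[of _ 1])
  have "\<exists>C. \<forall>z\<in>{0..max R 0}. \<bar>f (gpt i z)\<bar> \<le> C" if i: "i \<in> {1..N}" for i
  proof -
    have "compact ((\<lambda>z. f (gpt i z)) ` {0..max R 0})"
      by (rule compact_continuous_image) (auto intro: continuous_on_subset[OF C0_branch_continuous[OF f i]])
    then show ?thesis by (auto dest!: compact_imp_bounded simp: bounded_iff)
  qed
  then obtain C where C: "\<And>i z. i \<in> {1..N} \<Longrightarrow> z \<in> {0..max R 0} \<Longrightarrow> \<bar>f (gpt i z)\<bar> \<le> C i"
    by metis
  have "\<bar>f p\<bar> \<le> 1 + \<bar>f (0, 0)\<bar> + (\<Sum>i\<in>{1..N}. \<bar>C i\<bar>)" if p: "p \<in> Gset N" for p
  proof -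
    have sum: "0 \<le> (\<Sum>i\<in>{1..N}. \<bar>C i\<bar>)" by (rule sum_nonneg) simp
    consider "snd p > R" | "p = (0, 0)" | "fst p \<in> {1..N}" "0 < snd p" "snd p \<le> R"
      using p by (force simp: Gset_def)
    then show ?thesis
    proof cases
      case 1
      then have "\<bar>f p\<bar> < 1" using R p by blast
      then show ?thesis using sum by linarith
    next
      case 2
      then show ?thesis using sum by simp
    next
      case 3
      then have "\<bar>f p\<bar> \<le> C (fst p)"
        using C[of "fst p" "snd p"] by (simp add: gpt_def)
      also have "\<dots> \<le> (\<Sum>i\<in>{1..N}. \<bar>C i\<bar>)"
        using member_le_sum[of "fst p" "{1..N}" "\<lambda>i. \<bar>C i\<bar>"] 3 by auto
      finally show ?thesis by simp
    qed
  qed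
  then show ?thesis using that by blast
qed

lemma sets_borel_nat_real: "sets (borel :: (nat \<times> real) measure) = sets (count_space UNIV \<Otimes>\<^sub>M borel)"
  unfolding borel_prod[symmetric]
  by (rule sets_pair_measure_cong) (simp_all add: sets_borel_eq_count_space)

definition open_branch :: "nat \<Rightarrow> (nat \<times> real) set" where
  "open_branch i = {p. fst p = i \<and> snd p > 0}"

lemma open_branch_borel [measurable]: "open_branch i \<in> sets borel"
proof -
  have "open_branch i = {i} \<times> {0<..}" by (auto simp: open_branch_def)
  then show ?thesis unfolding sets_borel_nat_real by simp
qed

lemma snd_borel_measurable [measurable]: "snd \<in> borel_measurable (borel :: (nat \<times> real) measure)"
  unfolding measurable_cong_sets[OF sets_borel_nat_real refl] by measurable

definition branch_marginal :: "(nat \<times> real) measure \<Rightarrow> nat \<Rightarrow> real measure" where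
  "branch_marginal \<mu> i = distr (density \<mu> (\<lambda>p. ennreal (indicator (open_branch i) p))) borel snd"

definition radial_marginal :: "(nat \<times> real) measure \<Rightarrow> real measure" where
  "radial_marginal \<mu> = distr \<mu> borel snd"

lemma sets_branch_marginal [simp]: "sets (branch_marginal \<mu> i) = sets borel"
  by (simp add: branch_marginal_def)

lemma sets_radial_marginal [simp]: "sets (radial_marginal \<mu>) = sets borel"
  by (simp add: radial_marginal_def)

context
  fixes \<mu> :: "(nat \<times> real) measure" and N :: nat
  assumes sets_\<mu>: "sets \<mu> = sets (Gm N)" and finite_\<mu>: "finite_measure \<mu>"
begin

lemma space_Gm_measure: "space \<mu> = Gset N"
  using sets_eq_imp_space_eq[OF sets_\<mu>] by (simp add: Gm_def space_restrict_space)

lemma measurable_Gm_measure: "g \<in> measurable borel M \<Longrightarrow> g \<in> measurable \<mu> M"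
  unfolding measurable_cong_sets[OF sets_\<mu> refl] Gm_def by (rule measurable_restrict_space1)

lemma snd_measurable_Gm_measure [measurable]: "snd \<in> borel_measurable \<mu>"
  by (rule measurable_Gm_measure) measurable

lemma open_branch_indicator_measurable_Gm_measure [measurable]:
  "(\<lambda>p. indicator (open_branch i) p :: real) \<in> borel_measurable \<mu>"
  by (rule measurable_Gm_measure) measurable

lemma finite_measure_radial_marginal: "finite_measure (radial_marginal \<mu>)"
  unfolding radial_marginal_def by (rule finite_measure.finite_measure_distr[OF finite_\<mu>]) simp

lemma finite_measure_branch_marginal: "finite_measure (branch_marginal \<mu> i)"
proof -
  let ?\<nu> = "density \<mu> (\<lambda>p. ennreal (indicator (open_branch i) p))"
  have "finite_measure ?\<nu>"
  proof (rule finite_measureI)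
    have "emeasure ?\<nu> (space \<mu>) = (\<integral>\<^sup>+p. ennreal (indicator (open_branch i) p) \<partial>\<mu>)"
      by (subst emeasure_density) (auto intro!: nn_integral_cong)
    also have "\<dots> \<le> (\<integral>\<^sup>+p. 1 \<partial>\<mu>)"
      by (intro nn_integral_mono) (simp split: split_indicator)
    also have "\<dots> < \<infinity>"
      using finite_measure.emeasure_finite[OF finite_\<mu>, of "space \<mu>"] by (simp add: top.not_eq_extremum)
    finally show "emeasure ?\<nu> (space ?\<nu>) \<noteq> \<infinity>" by simp
  qed
  then show ?thesis
    unfolding branch_marginal_def by (rule finite_measure.finite_measure_distr) simp
qed

lemma integral_branch_marginal:
  fixes h :: "real \<Rightarrow> real"
  assumes [measurable]: "h \<in> borel_measurable borel"
  shows "(\<integral>z. h z \<partial>branch_marginal \<mu> i) = (\<integral>p. indicator (open_branch i) p * h (snd p) \<partial>\<mu>)"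
proof -
  have "snd \<in> measurable (density \<mu> (\<lambda>p. ennreal (indicator (open_branch i) p))) borel"
    by simp
  then show ?thesis
    unfolding branch_marginal_def by (simp add: integral_distr integral_density)
qed

lemma integral_radial_marginal:
  fixes h :: "real \<Rightarrow> real"
  assumes [measurable]: "h \<in> borel_measurable borel"
  shows "(\<integral>z. h z \<partial>radial_marginal \<mu>) = (\<integral>p. h (snd p) \<partial>\<mu>)"
  unfolding radial_marginal_def by (simp add: integral_distr)

lemma branch_marginal_nonpos_null: "emeasure (branch_marginal \<mu> i) {..0} = 0"
proof -
  have "emeasure (density \<mu> (\<lambda>p. ennreal (indicator (open_branch i) p))) (snd -` {..0} \<inter> space \<mu>)
      = (\<integral>\<^sup>+p. 0 \<partial>\<mu>)"
  proof (subst emeasure_density)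
    show "(\<integral>\<^sup>+p. ennreal (indicator (open_branch i) p) * indicator (snd -` {..0} \<inter> space \<mu>) p \<partial>\<mu>)
        = (\<integral>\<^sup>+p. 0 \<partial>\<mu>)"
      by (intro nn_integral_cong) (auto simp: open_branch_def split: split_indicator)
  qed simp_all
  then show ?thesis
    unfolding branch_marginal_def by (simp add: emeasure_distr)
qed

lemma radial_marginal_neg_null: "emeasure (radial_marginal \<mu>) {..<0} = 0"
proof -
  have "snd -` {..<0} \<inter> space \<mu> = {}"
    by (auto simp: space_Gm_measure Gset_def)
  then show ?thesis
    unfolding radial_marginal_def by (simp add: emeasure_distr)
qed

lemma integrable_bounded_Gm_measure:
  fixes g :: "nat \<times> real \<Rightarrow> real"
  assumes "g \<in> borel_measurable \<mu>" "\<And>p. p \<in> Gset N \<Longrightarrow> \<bar>g p\<bar> \<le> C"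
  shows "integrable \<mu> g"
  using assms space_Gm_measure by (intro finite_measure.integrable_const_bound[OF finite_\<mu>, of _ C]) auto

lemma integral_decompose_branches:
  assumes f: "f \<in> C0 N"
  shows "(\<integral>p. f p \<partial>\<mu>) = (\<Sum>i=1..N. \<integral>z. indicator {0<..} z * f (i, z) \<partial>branch_marginal \<mu> i)
      + f (0, 0) * measure (radial_marginal \<mu>) {0}"
proof -
  obtain C where C: "\<And>p. p \<in> Gset N \<Longrightarrow> \<bar>f p\<bar> \<le> C" using C0_bounded[OF f] by blast
  have "C \<ge> 0" using C[of "(0, 0)"] by (simp add: Gset_def)
  define \<phi> where "\<phi> i z = indicator {0<..} z * f (i, z)" for i z
  have \<phi>_measurable: "\<phi> i \<in> borel_measurable borel" if "i \<in> {1..N}" for i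
    unfolding \<phi>_def using C0_branch_measurable[OF f that] .
  have int: "integrable \<mu> (\<lambda>p. indicator (open_branch i) p * \<phi> i (snd p))" if i: "i \<in> {1..N}" for i
  proof (rule integrable_bounded_Gm_measure[of _ C])
    show "(\<lambda>p. indicator (open_branch i) p * \<phi> i (snd p)) \<in> borel_measurable \<mu>"
      by (intro borel_measurable_times open_branch_indicator_measurable_Gm_measure
          measurable_compose[OF snd_measurable_Gm_measure \<phi>_measurable[OF i]])
    show "\<bar>indicator (open_branch i) p * \<phi> i (snd p)\<bar> \<le> C" if "p \<in> Gset N" for p
      using C[OF that] \<open>C \<ge> 0\<close> by (auto simp: \<phi>_def open_branch_def split: split_indicator)
  qed
  have int0: "integrable \<mu> (\<lambda>p. indicator {0} (snd p) :: real)"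
    by (intro integrable_bounded_Gm_measure[of _ 1]) (auto split: split_indicator)
  have "f p = (\<Sum>i=1..N. indicator (open_branch i) p * \<phi> i (snd p)) + f (0, 0) * indicator {0} (snd p)"
    if p: "p \<in> Gset N" for p
  proof (cases "snd p = 0")
    case True
    then show ?thesis using p by (auto simp: Gset_def open_branch_def intro!: sum.neutral)
  next
    case False
    then have "fst p \<in> {1..N}" "snd p > 0" using p by (auto simp: Gset_def)
    moreover have "(\<Sum>i=1..N. indicator (open_branch i) p * \<phi> i (snd p)) = (\<Sum>i=1..N. if i = fst p then f p else 0)"
      using \<open>snd p > 0\<close> by (intro sum.cong) (auto simp: open_branch_def \<phi>_def)
    ultimately show ?thesis using False by simp
  qed
  then have "(\<integral>p. f p \<partial>\<mu>) = (\<integral>p. (\<Sum>i=1..N. indicator (open_branch i) p * \<phi> i (snd p))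
      + f (0, 0) * indicator {0} (snd p) \<partial>\<mu>)"
    by (intro Bochner_Integration.integral_cong) (auto simp: space_Gm_measure)
  also have "\<dots> = (\<Sum>i=1..N. \<integral>p. indicator (open_branch i) p * \<phi> i (snd p) \<partial>\<mu>)
      + f (0, 0) * (\<integral>p. indicator {0} (snd p) \<partial>\<mu>)"
  proof -
    have "integrable \<mu> (\<lambda>p. \<Sum>i=1..N. indicator (open_branch i) p * \<phi> i (snd p))"
      by (rule Bochner_Integration.integrable_sum) (use int in auto)
    then have "(\<integral>p. (\<Sum>i=1..N. indicator (open_branch i) p * \<phi> i (snd p)) + f (0, 0) * indicator {0} (snd p) \<partial>\<mu>)
        = (\<integral>p. (\<Sum>i=1..N. indicator (open_branch i) p * \<phi> i (snd p)) \<partial>\<mu>)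
          + (\<integral>p. f (0, 0) * indicator {0} (snd p) \<partial>\<mu>)"
      using int0 by (intro Bochner_Integration.integral_add) simp_all
    also have "(\<integral>p. (\<Sum>i=1..N. indicator (open_branch i) p * \<phi> i (snd p)) \<partial>\<mu>)
        = (\<Sum>i=1..N. \<integral>p. indicator (open_branch i) p * \<phi> i (snd p) \<partial>\<mu>)"
      by (rule Bochner_Integration.integral_sum) (use int in auto)
    also have "(\<integral>p. f (0, 0) * indicator {0} (snd p) \<partial>\<mu>) = f (0, 0) * (\<integral>p. indicator {0} (snd p) \<partial>\<mu>)"
      by (rule integral_mult_right_zero)
    finally show ?thesis .
  qed
  also have "\<dots> = (\<Sum>i=1..N. \<integral>z. \<phi> i z \<partial>branch_marginal \<mu> i) + f (0, 0) * measure (radial_marginal \<mu>) {0}"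
  proof -
    have "(\<integral>p. indicator {0} (snd p) \<partial>\<mu>) = (\<integral>z. indicator {0} z \<partial>radial_marginal \<mu> :: real)"
      by (rule integral_radial_marginal[symmetric]) simp
    also have "\<dots> = measure (radial_marginal \<mu>) {0}"
      by (simp add: radial_marginal_def)
    moreover have "(\<Sum>i=1..N. \<integral>p. indicator (open_branch i) p * \<phi> i (snd p) \<partial>\<mu>)
        = (\<Sum>i=1..N. \<integral>z. \<phi> i z \<partial>branch_marginal \<mu> i)"
      by (intro sum.cong refl integral_branch_marginal[OF \<phi>_measurable, symmetric]) simp
    ultimately show ?thesis by simp
  qed
  finally show ?thesis unfolding \<phi>_def .
qed

end

section \<open>Identification of the kernel\<close>

lemma feller_kernel_finite:
  assumes "feller N K" "t \<ge> 0" "x \<in> Gset N"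
  shows "sets (K t x) = sets (Gm N)" "finite_measure (K t x)"
proof -
  have "K t x \<in> space (subprob_algebra (Gm N))"
    using assms by (intro measurable_space[of "K t" "Gm N"]) (auto simp: feller_def Gm_def space_restrict_space)
  then show "sets (K t x) = sets (Gm N)" "finite_measure (K t x)"
    by (auto simp: space_subprob_algebra subprob_space_def)
qed

context
  fixes N :: nat and \<alpha> :: "nat \<Rightarrow> real" and K :: "real \<Rightarrow> nat \<times> real \<Rightarrow> (nat \<times> real) measure"
    and t :: real and x :: "nat \<times> real"
  assumes \<alpha>_pos: "\<forall>i\<in>{1..N}. \<alpha> i > 0" and \<alpha>_sum: "(\<Sum>i=1..N. \<alpha> i) = 1"
    and feller: "feller N K" and dynkin: "dynkin_formula N \<alpha> K"
    and t: "t > 0" and x: "x \<in> Gset N"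
begin

lemma sets_K: "sets (K t x) = sets (Gm N)" and finite_K: "finite_measure (K t x)"
  using feller_kernel_finite[OF feller _ x] t by auto

lemma snd_x_nonneg: "snd x \<ge> 0"
  using x by (auto simp: Gset_def)

lemma radial_marginal_eq_reflected_heat: "radial_marginal (K t x) = reflected_heat_measure t (snd x)"
proof (rule cosine_transform_unique)
  show "finite_measure (radial_marginal (K t x))" "finite_measure (reflected_heat_measure t (snd x))"
    using finite_measure_radial_marginal[OF sets_K finite_K] finite_measure_reflected_heat_measure[OF t] .
  show "sets (radial_marginal (K t x)) = sets borel" "sets (reflected_heat_measure t (snd x)) = sets borel"
    using sets_K finite_K t by simp_all
  show "emeasure (radial_marginal (K t x)) {..<0} = 0"
    by (rule radial_marginal_neg_null[OF sets_K finite_K])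
  show "emeasure (reflected_heat_measure t (snd x)) {..<0} = 0"
    using emeasure_mono[of "{..<0}" "{..0}" "reflected_heat_measure t (snd x)"]
      reflected_heat_measure_nonpos_null[OF t] by fastforce
  fix w
  have "(\<integral>z. cos (w * z) \<partial>radial_marginal (K t x)) = Qop K t (cos_test w) x"
    by (simp add: integral_radial_marginal[OF sets_K finite_K] Qop_def cos_test_def)
  also have "\<dots> = exp (- (w^2 * t) / 2) * cos (w * snd x)"
    using Qop_eigenfunction[OF dynkin cos_test_in_Dal fpp_cos_test x] t by (simp add: cos_test_def)
  also have "\<dots> = (\<integral>z. cos (w * z) \<partial>reflected_heat_measure t (snd x))"
    using half_line_heat_cos[OF t] by (simp add: integral_reflected_heat_measure[OF t, where C=1])
  finally show "(\<integral>z. cos (w * z) \<partial>radial_marginal (K t x)) = (\<integral>z. cos (w * z) \<partial>reflected_heat_measure t (snd x))" .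
qed

lemma integral_sin_branch_marginal:
  assumes i: "i \<in> {1..N}"
  shows "(\<integral>z. sin (w * z) \<partial>branch_marginal (K t x) i)
      = \<alpha> i * (\<integral>p. sin (w * snd p) \<partial>K t x)
        + ((if i = fst x then 1 else 0) - \<alpha> i) * (exp (- (w^2 * t) / 2) * sin (w * snd x))"
proof -
  have \<alpha>_i: "\<alpha> i > 0" using \<alpha>_pos i by blast
  define B where "B k = (if k = i then 1 / \<alpha> i else 0) - 1" for k
  let ?branch = "\<integral>z. sin (w * z) \<partial>branch_marginal (K t x) i"
  let ?radial = "\<integral>p. sin (w * snd p) \<partial>K t x"
  have "(\<Sum>k=1..N. \<alpha> k * B k) = (\<Sum>k=1..N. (if k = i then 1 else 0) - \<alpha> k)"
    using \<alpha>_i by (intro sum.cong) (auto simp: B_def algebra_simps)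
  then have kirchhoff: "(\<Sum>k=1..N. \<alpha> k * B k) = 0"
    using i \<alpha>_sum by (simp add: sum_subtractf)
  have measurable: "(\<lambda>p. indicator (open_branch i) p * sin (w * snd p)) \<in> borel_measurable (K t x)"
    "(\<lambda>p. sin (w * snd p)) \<in> borel_measurable (K t x)"
    using snd_measurable_Gm_measure[OF sets_K finite_K] open_branch_indicator_measurable_Gm_measure[OF sets_K finite_K]
    by (auto intro!: borel_measurable_times measurable_compose[where g="\<lambda>z. sin (w * z)"])
  have integrable: "integrable (K t x) (\<lambda>p. indicator (open_branch i) p * sin (w * snd p))"
    "integrable (K t x) (\<lambda>p. sin (w * snd p))"
    using measurable
    by (auto intro!: integrable_bounded_Gm_measure[OF sets_K finite_K, of _ 1] simp: abs_mult mult_le_one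
        split: split_indicator)
  have "sin_test B w p = 1 / \<alpha> i * (indicator (open_branch i) p * sin (w * snd p)) - sin (w * snd p)"
    if "p \<in> Gset N" for p
    using that by (cases "snd p = 0") (auto simp: sin_test_def B_def open_branch_def Gset_def left_diff_distrib)
  then have "Qop K t (sin_test B w) x
      = (\<integral>p. 1 / \<alpha> i * (indicator (open_branch i) p * sin (w * snd p)) - sin (w * snd p) \<partial>K t x)"
    unfolding Qop_def using space_Gm_measure[OF sets_K finite_K] by (intro Bochner_Integration.integral_cong) auto
  also have "\<dots> = 1 / \<alpha> i * ?branch - ?radial"
    using integral_branch_marginal[OF sets_K finite_K, of "\<lambda>z. sin (w * z)" i]
    by (subst Bochner_Integration.integral_diff[OF integrable_mult_right[OF integrable(1)] integrable(2)],
        subst integral_mult_right_zero) simp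
  finally have "1 / \<alpha> i * ?branch - ?radial = exp (- (w^2 * t) / 2) * (B (fst x) * sin (w * snd x))"
    using Qop_eigenfunction[OF dynkin sin_test_in_Dal[OF kirchhoff] fpp_sin_test x] t
    by (simp add: sin_test_def)
  then have "?branch = \<alpha> i * ?radial + \<alpha> i * B (fst x) * (exp (- (w^2 * t) / 2) * sin (w * snd x))"
    using \<alpha>_i by (simp add: field_simps)
  also have "\<alpha> i * B (fst x) = (if i = fst x then 1 else 0) - \<alpha> i"
    using \<alpha>_i by (cases "i = fst x") (auto simp: B_def field_simps)
  finally show ?thesis .
qed

lemma branch_marginal_eq_walsh_branch:
  assumes i: "i \<in> {1..N}"
  shows "branch_marginal (K t x) i = walsh_branch_measure \<alpha> t x i"
proof (rule sine_transform_unique)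
  have \<alpha>_i: "\<alpha> i > 0" using \<alpha>_pos i by blast
  show "finite_measure (branch_marginal (K t x) i)" "finite_measure (walsh_branch_measure \<alpha> t x i)"
    using finite_measure_branch_marginal[OF sets_K finite_K]
      finite_measure_walsh_branch_measure[OF t _ snd_x_nonneg] \<alpha>_i by auto
  show "sets (branch_marginal (K t x) i) = sets borel" "sets (walsh_branch_measure \<alpha> t x i) = sets borel"
    by simp_all
  show "emeasure (branch_marginal (K t x) i) {..0} = 0"
    by (rule branch_marginal_nonpos_null[OF sets_K finite_K])
  show "emeasure (walsh_branch_measure \<alpha> t x i) {..0} = 0"
    using walsh_branch_measure_nonpos_null[OF t _ snd_x_nonneg] \<alpha>_i by simp
  fix w
  let ?H = "\<lambda>y. half_line_heat t y (\<lambda>z. sin (w * z))"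
  have "(\<integral>p. sin (w * snd p) \<partial>K t x) = ?H (snd x) + ?H (- snd x)"
    using integral_radial_marginal[OF sets_K finite_K, of "\<lambda>z. sin (w * z)"]
      integral_reflected_heat_measure[OF t, of "\<lambda>z. sin (w * z)" 1]
    by (simp add: radial_marginal_eq_reflected_heat)
  then have "(\<integral>z. sin (w * z) \<partial>branch_marginal (K t x) i)
      = \<alpha> i * (?H (snd x) + ?H (- snd x)) + ((if i = fst x then 1 else 0) - \<alpha> i) * (?H (snd x) - ?H (- snd x))"
    by (simp add: integral_sin_branch_marginal[OF i] half_line_heat_sin[OF t])
  also have "\<dots> = 2 * \<alpha> i * ?H (- snd x) + (if i = fst x then ?H (snd x) - ?H (- snd x) else 0)"
    by (simp add: algebra_simps)
  also have "\<dots> = (\<integral>z. sin (w * z) \<partial>walsh_branch_measure \<alpha> t x i)"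
    using integral_walsh_branch_measure[OF t _ snd_x_nonneg, of \<alpha> i "\<lambda>z. sin (w * z)" 1] \<alpha>_i by simp
  finally show "(\<integral>z. sin (w * z) \<partial>branch_marginal (K t x) i) = (\<integral>z. sin (w * z) \<partial>walsh_branch_measure \<alpha> t x i)" .
qed

lemma Qop_eq_walshP:
  assumes f: "f \<in> C0 N"
  shows "Qop K t f x = walshP N \<alpha> t f x"
proof -
  obtain C where C: "\<And>p. p \<in> Gset N \<Longrightarrow> \<bar>f p\<bar> \<le> C" using C0_bounded[OF f] by blast
  define \<phi> where "\<phi> i z = indicator {0<..} z * f (i, z)" for i z
  have \<phi>_measurable: "\<phi> i \<in> borel_measurable borel" if "i \<in> {1..N}" for i
    unfolding \<phi>_def by (rule C0_branch_measurable[OF f that])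
  have \<phi>_bounded: "\<bar>\<phi> i z\<bar> \<le> C" if "i \<in> {1..N}" for i z
    using C[of "(i, z)"] C[of "(0, 0)"] that by (auto simp: \<phi>_def Gset_def split: split_indicator)
  have "measure (radial_marginal (K t x)) {0} = 0"
    using emeasure_mono[of "{0}" "{..0}" "reflected_heat_measure t (snd x)"]
      reflected_heat_measure_nonpos_null[OF t]
    by (simp add: radial_marginal_eq_reflected_heat measure_def)
  then have "Qop K t f x = (\<Sum>i=1..N. \<integral>z. \<phi> i z \<partial>branch_marginal (K t x) i)"
    unfolding Qop_def \<phi>_def using integral_decompose_branches[OF sets_K finite_K f] by simp
  also have "\<dots> = (\<Sum>i=1..N. \<integral>z. \<phi> i z \<partial>walsh_branch_measure \<alpha> t x i)"
    by (intro sum.cong refl) (simp add: branch_marginal_eq_walsh_branch)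
  also have "\<dots> = (\<Sum>i=1..N. 2 * \<alpha> i * half_line_heat t (- snd x) (\<phi> i)
      + (if i = fst x then half_line_heat t (snd x) (\<phi> i) - half_line_heat t (- snd x) (\<phi> i) else 0))"
    using \<alpha>_pos \<phi>_measurable \<phi>_bounded
    by (intro sum.cong refl integral_walsh_branch_measure[OF t _ snd_x_nonneg]) (auto intro: less_imp_le)
  also have "\<dots> = walshP N \<alpha> t f x"
    unfolding \<phi>_def by (rule walshP_eq_sum_half_line_heat[OF t x C0_branch_measurable[OF f], symmetric])
  finally show ?thesis .
qed

end

theorem mainTheorem5:
  fixes N :: nat and \<alpha> :: "nat \<Rightarrow> real"
    and K :: "real \<Rightarrow> nat \<times> real \<Rightarrow> (nat \<times> real) measure"
  assumes alpha_pos: "\<forall>i\<in>{1..N}. \<alpha> i > 0"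
    and alpha_sum: "(\<Sum>i=1..N. \<alpha> i) = 1"
    and fel: "feller N K"
    and eq: "\<forall>f\<in>Dal N \<alpha>. \<forall>x\<in>Gset N. \<forall>t\<ge>0.
               integrable (K t x) f \<and>
               (\<lambda>u. Qop K u (fpp N f) x) integrable_on {0..t} \<and>
               Qop K t f x = f x + (1/2) * integral {0..t} (\<lambda>u. Qop K u (fpp N f) x)"
  shows "\<forall>t\<ge>0. \<forall>f\<in>C0 N. \<forall>x\<in>Gset N. Qop K t f x = walshP N \<alpha> t f x"
proof (intro allI impI ballI)
  fix t :: real and f x
  assume t: "t \<ge> 0" and f: "f \<in> C0 N" and x: "x \<in> Gset N"
  have dynkin: "dynkin_formula N \<alpha> K"
    using eq unfolding dynkin_formula_def .
  show "Qop K t f x = walshP N \<alpha> t f x"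
  proof (cases "t = 0")
    case True
    then show ?thesis using fel f x by (simp add: feller_def walshP_def)
  next
    case False
    with t have "t > 0" by simp
    from Qop_eq_walshP[OF alpha_pos alpha_sum fel dynkin this x f] show ?thesis .
  qed
qed

end
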